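(* Let $N>0$ and $\tau\in(0,1)$, and let $(v_1,v_2)$ be a radial solution of $(P)_\tau$ (as described in the context). For every $0<r_0<R_0$ there exist a constant $C_0=C_0(\tau,N,R_0/r_0)>0$ and $\gamma=\gamma(R_0/r_0)\in(0,1)$ (depending only on the indicated quantities) such that $$\max_{[r_0,R_0]}v_1\le\gamma\min_{[r_0,R_0]}v_1+2(N+1)(\gamma-1)\log r_0+C_0,$$ $$\max_{[r_0,R_0]}v_2\le\gamma\min_{[r_0,R_0]}v_2+2(\gamma-1)\log r_0+C_0.$$
   Context: A radial solution of $(P)_\tau$ is a pair $v_1,v_2\in C([0,\infty))\cap C^2((0,\infty))$ with, for $r>0$, $$-(rv_1')'=r^{2N+1}e^{v_1}-\tau re^{v_2},\qquad -(rv_2')'=re^{v_2}-\tau r^{2N+1}e^{v_1},$$ $v_1'(0)=v_2'(0)=0$, $$\beta_1=\int_0^\infty r^{2N+1}e^{v_1}\,dr<\infty,\qquad \beta_2=\int_0^\infty re^{v_2}\,dr<\infty,$$ and $\lim_{r\to\infty}rv_1'(r)=-(\beta_1-\tau\beta_2)$, $\lim_{r\to\infty}rv_2'(r)=-(\beta_2-\tau\beta_1)$. *)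

theory Defs
  imports "HOL-Analysis.Analysis"
begin

definition C2_pos :: "(real \<Rightarrow> real) \<Rightarrow> bool" where
  "C2_pos v \<longleftrightarrow>
     (\<forall>r>0. v differentiable (at r) \<and> deriv v differentiable (at r)) \<and>
     continuous_on {0<..} (deriv (deriv v))"

definition beta1 :: "real \<Rightarrow> (real \<Rightarrow> real) \<Rightarrow> real" where
  "beta1 N v1 = integral {0<..} (\<lambda>r. r powr (2*N+1) * exp (v1 r))"

definition beta2 :: "(real \<Rightarrow> real) \<Rightarrow> real" where
  "beta2 v2 = integral {0<..} (\<lambda>r. r * exp (v2 r))"

definition radial_solution :: "real \<Rightarrow> real \<Rightarrow> (real \<Rightarrow> real) \<Rightarrow> (real \<Rightarrow> real) \<Rightarrow> bool" where
  "radial_solution N \<tau> v1 v2 \<longleftrightarrow>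
     continuous_on {0..} v1 \<and> continuous_on {0..} v2 \<and>
     C2_pos v1 \<and> C2_pos v2 \<and>
     (\<forall>r>0. ((\<lambda>s. s * deriv v1 s) has_real_derivative
               - (r powr (2*N+1) * exp (v1 r) - \<tau> * r * exp (v2 r))) (at r)) \<and>
     (\<forall>r>0. ((\<lambda>s. s * deriv v2 s) has_real_derivative
               - (r * exp (v2 r) - \<tau> * r powr (2*N+1) * exp (v1 r))) (at r)) \<and>
     (v1 has_real_derivative 0) (at 0 within {0..}) \<and>
     (v2 has_real_derivative 0) (at 0 within {0..}) \<and>
     (\<lambda>r. r powr (2*N+1) * exp (v1 r)) integrable_on {0<..} \<and>
     (\<lambda>r. r * exp (v2 r)) integrable_on {0<..} \<and>
     ((\<lambda>r. r * deriv v1 r) \<longlongrightarrow> - (beta1 N v1 - \<tau> * beta2 v2)) at_top \<and>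
     ((\<lambda>r. r * deriv v2 r) \<longlongrightarrow> - (beta2 v2 - \<tau> * beta1 N v1)) at_top"

end

theory Submission
  imports Defs
begin

text \<open>Along a radial solution the Pohozaev-type quantity below is constant on \<open>(0,\<infinity>)\<close>; since
  \<open>r v\<^sub>i'(r) \<rightarrow> 0\<close> as \<open>r \<rightarrow> 0\<close>, it vanishes identically. For \<open>0 < \<tau> < 1\<close> its quadratic part is
  positive definite, which yields bounds on \<open>r v\<^sub>i'(r)\<close> and on \<open>r\<^sup>2\<^sup>N\<^sup>+\<^sup>2 e\<^sup>v\<^sup>1 + r\<^sup>2 e\<^sup>v\<^sup>2\<close> depending only
  on \<open>N\<close> and \<open>\<tau>\<close>. The first makes \<open>v\<^sub>i\<close> Lipschitz in \<open>log r\<close>, so its oscillation on \<open>[r\<^sub>0, \<rho> r\<^sub>0]\<close>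
  is at most a constant times \<open>log \<rho>\<close>; the second bounds \<open>v\<^sub>i(r\<^sub>0)\<close> above by \<open>-n log r\<^sub>0 + C\<close>,
  which turns the oscillation bound into the Harnack-type inequality with \<open>\<gamma> = 1/2\<close>.\<close>

lemma radial_solution_has_deriv:
  assumes "radial_solution N \<tau> v1 v2" and "r > 0"
  shows "(v1 has_real_derivative deriv v1 r) (at r)" "(v2 has_real_derivative deriv v2 r) (at r)"
  using assms DERIV_deriv_iff_real_differentiable
  unfolding radial_solution_def C2_pos_def by blast+

lemma radial_solution_flux_has_deriv:
  assumes "radial_solution N \<tau> v1 v2" and "r > 0"
  shows "((\<lambda>s. s * deriv v1 s) has_real_derivative
           - (r powr (2*N+1) * exp (v1 r) - \<tau> * (r * exp (v2 r)))) (at r)"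
    "((\<lambda>s. s * deriv v2 s) has_real_derivative
           - (r * exp (v2 r) - \<tau> * (r powr (2*N+1) * exp (v1 r)))) (at r)"
  using assms unfolding radial_solution_def by (simp_all add: mult.assoc)

lemma times_deriv_tendsto_0_at_right:
  fixes v D :: "real \<Rightarrow> real"
  assumes cont: "continuous_on {0..} v"
    and dv: "\<And>r. r > 0 \<Longrightarrow> (v has_real_derivative deriv v r) (at r)"
    and dw: "\<And>r. r > 0 \<Longrightarrow> ((\<lambda>s. s * deriv v s) has_real_derivative D r) (at r)"
    and bd: "\<And>r. 0 < r \<Longrightarrow> r \<le> 1 \<Longrightarrow> \<bar>D r\<bar> \<le> K"
  shows "((\<lambda>r. r * deriv v r) \<longlongrightarrow> 0) (at_right 0)"
proof -
  have mvt_estimate: "\<bar>r * deriv v r\<bar> \<le> 2 * \<bar>v r - v (r/2)\<bar> + K * r" if r: "0 < r" "r \<le> 1" for r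
  proof -
    obtain \<xi> where xi: "r/2 < \<xi>" "\<xi> < r" "v r - v (r/2) = (r - r/2) * deriv v \<xi>"
      using MVT2[of "r/2" r v "deriv v"] dv r by force
    have ratio: "\<xi> * deriv v \<xi> = (\<xi> / (r/2)) * (v r - v (r/2))"
      and "0 \<le> \<xi> / (r/2)" "\<xi> / (r/2) \<le> 2"
      using xi r by (auto simp: field_simps)
    then have near: "\<bar>\<xi> * deriv v \<xi>\<bar> \<le> 2 * \<bar>v r - v (r/2)\<bar>"
      unfolding ratio abs_mult by (intro mult_right_mono) auto
    obtain z where z: "\<xi> < z" "z < r" "r * deriv v r - \<xi> * deriv v \<xi> = (r - \<xi>) * D z"
      using MVT2[of \<xi> r "\<lambda>s. s * deriv v s" D] dw xi r by force
    have far: "\<bar>(r - \<xi>) * D z\<bar> \<le> K * r"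
      unfolding abs_mult using bd[of z] z xi r by (subst mult.commute, intro mult_mono) auto
    have "r * deriv v r = \<xi> * deriv v \<xi> + (r - \<xi>) * D z"
      using z(3) by simp
    then have "\<bar>r * deriv v r\<bar> \<le> \<bar>\<xi> * deriv v \<xi>\<bar> + \<bar>(r - \<xi>) * D z\<bar>"
      by (metis abs_triangle_ineq)
    with near far show ?thesis by linarith
  qed
  have v_lim: "(v \<longlongrightarrow> v 0) (at_right 0)"
    using cont unfolding continuous_on_def by (auto intro: tendsto_within_subset)
  have "filterlim (\<lambda>r::real. r/2) (at_right 0) (at_right 0)"
    unfolding filterlim_at
    by (auto simp: eventually_at_right_field intro!: exI[of _ 1] tendsto_eq_intros)
  with v_lim have v_half_lim: "((\<lambda>r. v (r/2)) \<longlongrightarrow> v 0) (at_right 0)"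
    by (rule filterlim_compose)
  have "((\<lambda>r. 2 * \<bar>v r - v (r/2)\<bar> + K * r) \<longlongrightarrow> 0) (at_right 0)"
    by (rule tendsto_eq_intros v_lim v_half_lim | simp)+
  moreover have "\<forall>\<^sub>F r in at_right 0. norm (r * deriv v r) \<le> 2 * \<bar>v r - v (r/2)\<bar> + K * r"
    unfolding eventually_at_right_field by (auto intro!: exI[of _ 1] mvt_estimate)
  ultimately show ?thesis by (rule Lim_null_comparison[rotated])
qed

text \<open>The coefficients \<open>2N + 2 + 2\<tau>\<close> and \<open>2 + \<tau>(2N + 2)\<close> are the ones for which the terms
  containing \<open>e\<^sup>v\<^sup>1\<close> and \<open>e\<^sup>v\<^sup>2\<close> cancel when this quantity is differentiated along a solution.\<close>
definition pohozaev :: "real \<Rightarrow> real \<Rightarrow> (real \<Rightarrow> real) \<Rightarrow> (real \<Rightarrow> real) \<Rightarrow> real \<Rightarrow> real" where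
  "pohozaev N \<tau> v1 v2 s =
     2 * (1 - \<tau>\<^sup>2) * (s powr (2 * (N + 1)) * exp (v1 s) + s\<^sup>2 * exp (v2 s))
     + 2 * (2 * N + 2 + 2 * \<tau>) * (s * deriv v1 s) + 2 * (2 + \<tau> * (2 * N + 2)) * (s * deriv v2 s)
     + (s * deriv v1 s)\<^sup>2 + (s * deriv v2 s)\<^sup>2 + 2 * \<tau> * (s * deriv v1 s) * (s * deriv v2 s)"

text \<open>\<open>u\<close> and \<open>p\<close> stand for \<open>r v\<^sub>1'(r)\<close> and \<open>r v\<^sub>2'(r)\<close>; keeping them abstract lets the
  derivative rules use the equations of \<open>(P)\<^sub>\<tau>\<close> for them instead of differentiating \<open>deriv\<close>.\<close>
lemma pohozaev_deriv_identity:
  fixes v1 v2 u p :: "real \<Rightarrow> real"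
  assumes r: "r > 0"
    and dv1: "(v1 has_real_derivative deriv v1 r) (at r)"
    and dv2: "(v2 has_real_derivative deriv v2 r) (at r)"
    and du: "(u has_real_derivative - (r powr (2*N+1) * exp (v1 r) - \<tau> * (r * exp (v2 r)))) (at r)"
    and dp: "(p has_real_derivative - (r * exp (v2 r) - \<tau> * (r powr (2*N+1) * exp (v1 r)))) (at r)"
    and ur: "u r = r * deriv v1 r" and pr: "p r = r * deriv v2 r"
  shows "((\<lambda>s. 2 * (1 - \<tau>\<^sup>2) * (s powr (2 * (N + 1)) * exp (v1 s) + s\<^sup>2 * exp (v2 s))
     + 2 * (2 * N + 2 + 2 * \<tau>) * u s + 2 * (2 + \<tau> * (2 * N + 2)) * p s
     + (u s)\<^sup>2 + (p s)\<^sup>2 + 2 * \<tau> * u s * p s) has_real_derivative 0) (at r)"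
proof -
  have exponent: "r powr (2 * (N + 1) - 1) = r powr (2*N+1)"
    by (simp add: algebra_simps)
  have power: "r powr (2 * (N + 1)) = r powr (2*N+1) * r"
    using powr_add[of r "2*N+1" 1] r by (simp add: algebra_simps)
  show ?thesis
    apply (rule derivative_eq_intros dv1 dv2 du dp r refl)+
    unfolding exponent power ur pr
    by (simp add: power2_eq_square algebra_simps)
qed

lemma pohozaev_has_derivative_0:
  assumes sol: "radial_solution N \<tau> v1 v2" and r: "r > 0"
  shows "(pohozaev N \<tau> v1 v2 has_real_derivative 0) (at r)"
  unfolding pohozaev_def[abs_def]
  using r radial_solution_has_deriv[OF sol r] radial_solution_flux_has_deriv[OF sol r]
  by (intro pohozaev_deriv_identity[where u = "\<lambda>s. s * deriv v1 s" and p = "\<lambda>s. s * deriv v2 s"])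
    simp_all

lemma radial_solution_flux_tendsto_0:
  assumes sol: "radial_solution N \<tau> v1 v2" and N: "N > 0" and \<tau>: "0 < \<tau>" "\<tau> < 1"
  shows "((\<lambda>s. s * deriv v1 s) \<longlongrightarrow> 0) (at_right 0)" "((\<lambda>s. s * deriv v2 s) \<longlongrightarrow> 0) (at_right 0)"
proof -
  have cont: "continuous_on {0..} v1" "continuous_on {0..} v2"
    using sol unfolding radial_solution_def by auto
  have bounded_above: "\<exists>B. \<forall>s\<in>{0..1}. v s \<le> B" if "continuous_on {0..} v" for v :: "real \<Rightarrow> real"
    using continuous_attains_sup[OF compact_Icc _ continuous_on_subset[OF that], of 0 1] by force
  obtain B1 where B1: "\<And>s. s \<in> {0..1} \<Longrightarrow> v1 s \<le> B1"
    using bounded_above[OF cont(1)] by blast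
  obtain B2 where B2: "\<And>s. s \<in> {0..1} \<Longrightarrow> v2 s \<le> B2"
    using bounded_above[OF cont(2)] by blast
  have rhs_bound: "\<bar>- (X - \<tau> * Y)\<bar> \<le> A + B"
    if "0 \<le> X" "X \<le> A" "0 \<le> Y" "Y \<le> B" for X Y A B
  proof -
    have "0 \<le> \<tau> * Y" "\<tau> * Y \<le> Y"
      using that \<tau> by (auto intro: mult_left_le_one_le)
    with that show ?thesis
      by (simp only: abs_le_iff) linarith
  qed
  have bounds_near_0: "s powr (2*N+1) * exp (v1 s) \<le> exp B1" "s * exp (v2 s) \<le> exp B2"
    if "0 < s" "s \<le> 1" for s
  proof -
    have "s powr (2*N+1) * exp (v1 s) \<le> exp (v1 s)"
      using that N by (intro mult_left_le_one_le powr_le1) auto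
    also have "\<dots> \<le> exp B1"
      using B1[of s] that by simp
    finally show "s powr (2*N+1) * exp (v1 s) \<le> exp B1" .
    have "s * exp (v2 s) \<le> exp (v2 s)"
      using that by (intro mult_left_le_one_le) auto
    also have "\<dots> \<le> exp B2"
      using B2[of s] that by simp
    finally show "s * exp (v2 s) \<le> exp B2" .
  qed
  show "((\<lambda>s. s * deriv v1 s) \<longlongrightarrow> 0) (at_right 0)"
    by (rule times_deriv_tendsto_0_at_right[where K = "exp B1 + exp B2",
          OF cont(1) radial_solution_has_deriv(1)[OF sol] radial_solution_flux_has_deriv(1)[OF sol]])
      (assumption | rule rhs_bound bounds_near_0 | simp)+
  show "((\<lambda>s. s * deriv v2 s) \<longlongrightarrow> 0) (at_right 0)"
    by (rule times_deriv_tendsto_0_at_right[where K = "exp B2 + exp B1",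
          OF cont(2) radial_solution_has_deriv(2)[OF sol] radial_solution_flux_has_deriv(2)[OF sol]])
      (assumption | rule rhs_bound bounds_near_0 | simp)+
qed

lemma pohozaev_tendsto_0_at_right:
  assumes sol: "radial_solution N \<tau> v1 v2" and N: "N > 0" and \<tau>: "0 < \<tau>" "\<tau> < 1"
  shows "(pohozaev N \<tau> v1 v2 \<longlongrightarrow> 0) (at_right 0)"
proof -
  note flux_lim = radial_solution_flux_tendsto_0[OF sol N \<tau>]
  have v_lim: "(v1 \<longlongrightarrow> v1 0) (at_right 0)" "(v2 \<longlongrightarrow> v2 0) (at_right 0)"
    using sol unfolding radial_solution_def continuous_on_def by (auto intro: tendsto_within_subset)
  have powr_lim: "((\<lambda>s::real. s powr (2 * (N + 1))) \<longlongrightarrow> 0) (at_right 0)"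
    using N by (auto intro!: tendsto_zero_powrI simp: eventually_at_right_field intro: exI[of _ 1])
  have "(pohozaev N \<tau> v1 v2 \<longlongrightarrow> 2 * (1 - \<tau>\<^sup>2) * (0 * exp (v1 0) + 0\<^sup>2 * exp (v2 0))
      + 2 * (2 * N + 2 + 2 * \<tau>) * 0 + 2 * (2 + \<tau> * (2 * N + 2)) * 0 + 0\<^sup>2 + 0\<^sup>2 + 2 * \<tau> * 0 * 0)
      (at_right 0)"
    unfolding pohozaev_def[abs_def]
    by (intro tendsto_intros powr_lim v_lim flux_lim tendsto_ident_at)
  then show ?thesis by simp
qed

lemma pohozaev_eq_0:
  assumes sol: "radial_solution N \<tau> v1 v2" and N: "N > 0" and \<tau>: "0 < \<tau>" "\<tau> < 1"
    and r: "r > 0"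
  shows "pohozaev N \<tau> v1 v2 r = 0"
proof -
  obtain c where c: "\<And>s. s \<in> {0<..} \<Longrightarrow> pohozaev N \<tau> v1 v2 s = c"
    using has_field_derivative_zero_constant[of "{0<..}" "pohozaev N \<tau> v1 v2"]
      pohozaev_has_derivative_0[OF sol] by (force intro: has_field_derivative_at_within)
  have "\<forall>\<^sub>F s in at_right 0. pohozaev N \<tau> v1 v2 s = c"
    unfolding eventually_at_right_field using c by (auto intro!: exI[of _ 1])
  with pohozaev_tendsto_0_at_right[OF sol N \<tau>] have "((\<lambda>_. c) \<longlongrightarrow> 0) (at_right (0::real))"
    by (rule Lim_transform_eventually)
  then have "c = 0" by (simp add: tendsto_const_iff)
  with c r show ?thesis by simp
qed

lemma quadratic_identity_bounds:
  fixes \<tau> a b L U P A :: real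
  assumes \<tau>: "0 < \<tau>" "\<tau> < 1" and a: "0 < a" "a \<le> L" and b: "0 < b" "b \<le> L" and A: "0 \<le> A"
    and eq: "2 * (1 - \<tau>\<^sup>2) * A + 2 * a * U + 2 * b * P + U\<^sup>2 + P\<^sup>2 + 2 * \<tau> * U * P = 0"
  defines "M \<equiv> 4 * L / (1 - \<tau>)"
  shows "\<bar>U\<bar> \<le> M" "\<bar>P\<bar> \<le> M" "A \<le> 2 * L * M / (1 - \<tau>\<^sup>2)"
proof -
  have "\<tau> * \<tau> < 1 * 1"
    using \<tau> by (intro mult_strict_mono) auto
  then have \<tau>2: "0 < 1 - \<tau>\<^sup>2"
    by (simp add: power2_eq_square)
  have "0 \<le> \<tau> * (U + P)\<^sup>2"
    using \<tau> by simp
  then have definite: "(1 - \<tau>) * (U\<^sup>2 + P\<^sup>2) \<le> U\<^sup>2 + P\<^sup>2 + 2 * \<tau> * U * P"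
    by (simp add: power2_eq_square algebra_simps)
  have linear: "- (c * X) \<le> L * \<bar>X\<bar>" if "0 < c" "c \<le> L" for c X
  proof -
    have "- (c * X) \<le> c * \<bar>X\<bar>"
      using abs_ge_minus_self[of "c * X"] that by (simp add: abs_mult)
    also have "\<dots> \<le> L * \<bar>X\<bar>"
      using that by (intro mult_right_mono) auto
    finally show ?thesis .
  qed
  with eq definite linear[OF a, of U] linear[OF b, of P] have main: "(1 - \<tau>) * (U\<^sup>2 + P\<^sup>2) + 2 * (1 - \<tau>\<^sup>2) * A \<le> 2 * L * (\<bar>U\<bar> + \<bar>P\<bar>)"
    by (simp add: algebra_simps)
  have A_part: "0 \<le> 2 * (1 - \<tau>\<^sup>2) * A" and sq_part: "0 \<le> (1 - \<tau>) * (U\<^sup>2 + P\<^sup>2)"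
    using \<tau>2 A \<tau> by auto
  define m where "m = max \<bar>U\<bar> \<bar>P\<bar>"
  have "(1 - \<tau>) * m\<^sup>2 \<le> (1 - \<tau>) * (U\<^sup>2 + P\<^sup>2)"
    using \<tau> by (intro mult_left_mono) (auto simp: m_def max_def)
  also have "\<dots> \<le> 2 * L * (\<bar>U\<bar> + \<bar>P\<bar>)"
    using main A_part by linarith
  also have "\<dots> \<le> 2 * L * (2 * m)"
    using a by (intro mult_left_mono) (auto simp: m_def)
  finally have "((1 - \<tau>) * m) * m \<le> (4 * L) * m"
    by (simp add: power2_eq_square algebra_simps)
  moreover have "0 \<le> m"
    by (simp add: m_def)
  ultimately have "(1 - \<tau>) * m \<le> 4 * L"
    using a by (cases "m = 0") (auto intro: mult_right_le_imp_le)
  then have "m \<le> M"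
    using \<tau> unfolding M_def by (simp add: pos_le_divide_eq mult.commute)
  then show UP: "\<bar>U\<bar> \<le> M" "\<bar>P\<bar> \<le> M"
    by (auto simp: m_def)
  have "2 * (1 - \<tau>\<^sup>2) * A \<le> 2 * L * (\<bar>U\<bar> + \<bar>P\<bar>)"
    using main sq_part by linarith
  also have "\<dots> \<le> 2 * L * (2 * M)"
    using UP a by (intro mult_left_mono) auto
  finally show "A \<le> 2 * L * M / (1 - \<tau>\<^sup>2)"
    using \<tau>2 by (simp add: field_simps)
qed

lemma radial_solution_bounds:
  assumes sol: "radial_solution N \<tau> v1 v2" and N: "N > 0" and \<tau>: "0 < \<tau>" "\<tau> < 1"
    and r: "r > 0"
  defines "M \<equiv> 4 * (2 * N + 4) / (1 - \<tau>)"
  defines "K \<equiv> 2 * (2 * N + 4) * M / (1 - \<tau>\<^sup>2)"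
  shows "\<bar>r * deriv v1 r\<bar> \<le> M" "\<bar>r * deriv v2 r\<bar> \<le> M"
    "r powr (2 * (N + 1)) * exp (v1 r) + r\<^sup>2 * exp (v2 r) \<le> K"
proof -
  have "0 \<le> \<tau> * (2 * N + 2)" "\<tau> * (2 * N + 2) \<le> 2 * N + 2"
    using N \<tau> by (auto intro: mult_left_le_one_le)
  then have coeffs: "0 < 2 * N + 2 + 2 * \<tau>" "2 * N + 2 + 2 * \<tau> \<le> 2 * N + 4"
    "0 < 2 + \<tau> * (2 * N + 2)" "2 + \<tau> * (2 * N + 2) \<le> 2 * N + 4"
    using N \<tau> by linarith+
  have "0 \<le> r powr (2 * (N + 1)) * exp (v1 r) + r\<^sup>2 * exp (v2 r)"
    by simp
  from quadratic_identity_bounds[OF \<tau> coeffs this pohozaev_eq_0[OF sol N \<tau> r, unfolded pohozaev_def]]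
  show "\<bar>r * deriv v1 r\<bar> \<le> M" "\<bar>r * deriv v2 r\<bar> \<le> M"
    "r powr (2 * (N + 1)) * exp (v1 r) + r\<^sup>2 * exp (v2 r) \<le> K"
    unfolding M_def K_def by simp_all
qed

lemma times_deriv_bound_imp_log_lipschitz:
  fixes v :: "real \<Rightarrow> real"
  assumes dv: "\<And>r. r > 0 \<Longrightarrow> (v has_real_derivative deriv v r) (at r)"
    and bd: "\<And>r. r > 0 \<Longrightarrow> \<bar>r * deriv v r\<bar> \<le> M"
    and "x > 0" "y > 0"
  shows "\<bar>v x - v y\<bar> \<le> M * \<bar>ln x - ln y\<bar>"
proof -
  have "norm (v (exp (ln x)) - v (exp (ln y))) \<le> M * norm (ln x - ln y)"
  proof (rule field_differentiable_bound[OF convex_UNIV])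
    show "((\<lambda>t. v (exp t)) has_field_derivative deriv v (exp t) * exp t) (at t within UNIV)" for t
      by (rule DERIV_chain2[OF dv DERIV_exp]) simp
    show "norm (deriv v (exp t) * exp t) \<le> M" for t
      using bd[of "exp t"] by (simp add: mult.commute)
  qed auto
  with assms show ?thesis by simp
qed

lemma harnack_inequality:
  fixes v :: "real \<Rightarrow> real"
  assumes dv: "\<And>r. r > 0 \<Longrightarrow> (v has_real_derivative deriv v r) (at r)"
    and bd: "\<And>r. r > 0 \<Longrightarrow> \<bar>r * deriv v r\<bar> \<le> M"
    and mass: "\<And>r. r > 0 \<Longrightarrow> r powr n * exp (v r) \<le> K"
    and K: "K > 0" and r0: "r0 > 0" and \<rho>: "\<rho> \<ge> 1" and \<gamma>: "0 \<le> \<gamma>" "\<gamma> \<le> 1"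
  shows "(SUP r\<in>{r0..\<rho>*r0}. v r) \<le> \<gamma> * (INF r\<in>{r0..\<rho>*r0}. v r)
           + n * (\<gamma> - 1) * ln r0 + M * ln \<rho> + \<bar>ln K\<bar>"
proof -
  define S where "S = {r0..\<rho>*r0}"
  have r0S: "r0 \<in> S"
    using r0 \<rho> by (simp add: S_def)
  have "0 \<le> M"
    using bd[of 1] by simp
  have oscillation: "v x \<le> v y + M * ln \<rho>" if "x \<in> S" "y \<in> S" for x y
  proof -
    have "ln r0 \<le> ln x" "ln x \<le> ln (\<rho> * r0)" "ln r0 \<le> ln y" "ln y \<le> ln (\<rho> * r0)"
      using that r0 by (auto simp: S_def)
    then have "\<bar>ln x - ln y\<bar> \<le> ln (\<rho> * r0) - ln r0"
      by linarith
    also have "\<dots> = ln \<rho>"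
      using r0 \<rho> by (simp add: ln_mult)
    finally have "M * \<bar>ln x - ln y\<bar> \<le> M * ln \<rho>"
      using \<open>0 \<le> M\<close> by (rule mult_left_mono)
    moreover have "\<bar>v x - v y\<bar> \<le> M * \<bar>ln x - ln y\<bar>"
      using that r0 by (intro times_deriv_bound_imp_log_lipschitz[OF dv bd]) (auto simp: S_def)
    ultimately show ?thesis
      by linarith
  qed
  define I where "I = (INF r\<in>S. v r)"
  have "bdd_below (v ` S)"
    using oscillation r0S by (intro bdd_belowI2[of _ "v r0 - M * ln \<rho>"]) force
  then have I_le: "I \<le> v r0"
    unfolding I_def by (rule cINF_lower[OF _ r0S])
  have le_I: "v x - M * ln \<rho> \<le> I" if "x \<in> S" for x
    unfolding I_def using r0S oscillation that by (intro cINF_greatest) force+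
  have "ln (r0 powr n * exp (v r0)) \<le> ln K"
    using mass[OF r0] K r0 by simp
  then have "n * ln r0 + v r0 \<le> ln K"
    using r0 by (simp add: ln_mult)
  then have "(1 - \<gamma>) * I \<le> (1 - \<gamma>) * (\<bar>ln K\<bar> - n * ln r0)"
    using I_le \<gamma> by (intro mult_left_mono) auto
  moreover have "(1 - \<gamma>) * \<bar>ln K\<bar> \<le> \<bar>ln K\<bar>"
    using \<gamma> by (simp add: mult_left_le_one_le)
  ultimately have "v x \<le> \<gamma> * I + n * (\<gamma> - 1) * ln r0 + M * ln \<rho> + \<bar>ln K\<bar>" if "x \<in> S" for x
    using le_I[OF that] by (simp add: algebra_simps)
  then show ?thesis
    unfolding S_def[symmetric] I_def[symmetric] using r0S by (intro cSUP_least) auto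
qed

theorem mainTheorem11:
  shows "\<forall>\<rho>::real. \<rho> > 1 \<longrightarrow>
    (\<exists>\<gamma>::real. 0 < \<gamma> \<and> \<gamma> < 1 \<and>
      (\<forall>(N::real) (\<tau>::real). N > 0 \<and> 0 < \<tau> \<and> \<tau> < 1 \<longrightarrow>
        (\<exists>C0::real. C0 > 0 \<and>
          (\<forall>r0 R0 v1 v2. 0 < r0 \<and> R0 = \<rho> * r0 \<and> radial_solution N \<tau> v1 v2 \<longrightarrow>
             (SUP r\<in>{r0..R0}. v1 r) \<le> \<gamma> * (INF r\<in>{r0..R0}. v1 r)
                + 2 * (N + 1) * (\<gamma> - 1) * ln r0 + C0 \<and>
             (SUP r\<in>{r0..R0}. v2 r) \<le> \<gamma> * (INF r\<in>{r0..R0}. v2 r)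
                + 2 * (\<gamma> - 1) * ln r0 + C0))))"
proof (rule allI, rule impI, rule exI[of _ "1/2"], intro conjI allI impI)
  fix \<rho> N \<tau> :: real
  assume \<rho>: "\<rho> > 1" and "N > 0 \<and> 0 < \<tau> \<and> \<tau> < 1"
  then have N: "N > 0" and \<tau>: "0 < \<tau>" "\<tau> < 1" by auto
  define M where "M = 4 * (2 * N + 4) / (1 - \<tau>)"
  define K where "K = 2 * (2 * N + 4) * M / (1 - \<tau>\<^sup>2)"
  have "\<tau>\<^sup>2 < 1"
    using \<tau> by (simp add: power_less_one_iff abs_less_iff)
  then have "M > 0" "K > 0"
    using N \<tau> by (simp_all add: M_def K_def)
  show "\<exists>C0>0. \<forall>r0 R0 v1 v2. 0 < r0 \<and> R0 = \<rho> * r0 \<and> radial_solution N \<tau> v1 v2 \<longrightarrow>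
      (SUP r\<in>{r0..R0}. v1 r) \<le> 1/2 * (INF r\<in>{r0..R0}. v1 r) + 2 * (N + 1) * (1/2 - 1) * ln r0 + C0 \<and>
      (SUP r\<in>{r0..R0}. v2 r) \<le> 1/2 * (INF r\<in>{r0..R0}. v2 r) + 2 * (1/2 - 1) * ln r0 + C0"
  proof (intro exI[of _ "M * ln \<rho> + \<bar>ln K\<bar> + 1"] conjI allI impI)
    show "M * ln \<rho> + \<bar>ln K\<bar> + 1 > 0"
      using \<open>M > 0\<close> \<rho> by (simp add: add_nonneg_pos)
    fix r0 R0 v1 v2 assume "0 < r0 \<and> R0 = \<rho> * r0 \<and> radial_solution N \<tau> v1 v2"
    then have r0: "0 < r0" and R0: "R0 = \<rho> * r0" and sol: "radial_solution N \<tau> v1 v2" by auto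
    note bounds = radial_solution_bounds[OF sol N \<tau>, folded M_def, folded K_def]
    have "r powr (2 * (N + 1)) * exp (v1 r) \<le> K" "r powr 2 * exp (v2 r) \<le> K" if "r > 0" for r
      using bounds(3)[OF that] that by (auto simp: add_nonneg_eq_0_iff intro: order.trans[rotated])
    with bounds(1,2) show "(SUP r\<in>{r0..R0}. v1 r) \<le> 1/2 * (INF r\<in>{r0..R0}. v1 r)
          + 2 * (N + 1) * (1/2 - 1) * ln r0 + (M * ln \<rho> + \<bar>ln K\<bar> + 1)"
      "(SUP r\<in>{r0..R0}. v2 r) \<le> 1/2 * (INF r\<in>{r0..R0}. v2 r)
          + 2 * (1/2 - 1) * ln r0 + (M * ln \<rho> + \<bar>ln K\<bar> + 1)"
      using harnack_inequality[OF radial_solution_has_deriv(1)[OF sol], of M "2 * (N + 1)" K r0 \<rho> "1/2"]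
        harnack_inequality[OF radial_solution_has_deriv(2)[OF sol], of M 2 K r0 \<rho> "1/2"]
        \<open>K > 0\<close> r0 \<rho> unfolding R0 by auto
  qed
qed (auto)

end
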